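(* Let $G$ be a connected (directed or undirected) graph with a marked vertex (the origin), and let $F_0,F_1$ be distributions on $\mathbb{R}$ with $F_1$ absolutely continuous w.r.t. $F_0$. Suppose there is a probability distribution $\pi$ on the set $\mathcal{P}$ of infinite self-avoiding paths in $G$ starting at the origin which has an exponential intersection tail with parameter $\eta\in(0,1)$. If $\chi^2(F_0,F_1)<\eta^{-1}-1$, then there is no sequence of tests $(T_m)$ for $H_0$ versus $H_{1,m}$ with $\gamma(T_m)\to0$.
   Context: $\mathcal{P}_m$ denotes the set of self-avoiding paths in $G$ starting at the origin and visiting $m$ vertices. Testing problem: under $H_0$ (law $\mathbf{P}_0$) the variables $X_v$, $v$ a vertex, are i.i.d. $F_0$; under $H_{1,m}$ with unknown path $p\in\mathcal{P}_m$ (law $\mathbf{P}_{1,p}$) they are independent with law $F_1$ for $v\in p$ and $F_0$ otherwise. A test is a measurable $\{0,1\}$-valued function of the $X_v$, with minimax risk $\gamma(T_m)=\mathbf{P}_0(T_m=1)+\sup_{p\in\mathcal{P}_m}\mathbf{P}_{1,p}(T_m=0)$. Exponential intersection tail with parameter $\eta$: there is $C>0$ such that if $P,P'$ are independent samples from $\pi$ and $N$ is the number of vertices they have in common, then $\mathbf{P}(N\ge k)\le C\eta^k$ for all $k\ge1$. Pearson $\chi^2$-distance: with $L=dF_1/dF_0$, $\chi^2(F_0,F_1)=\mathrm{Var}_{F_0}(L)$. *)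

theory Defs
  imports "HOL-Probability.Probability"
begin

text \<open>Graph: vertex type 'v, (directed) edge relation E; undirected graphs are the
  case of a symmetric E.\<close>

definition connected_graph :: "('v \<Rightarrow> 'v \<Rightarrow> bool) \<Rightarrow> 'v \<Rightarrow> bool" where
  "connected_graph E r0 \<longleftrightarrow> (\<forall>v. (r0, v) \<in> ({(a, b). E a b} \<union> {(a, b). E b a})\<^sup>*)"

definition inf_saw :: "('v \<Rightarrow> 'v \<Rightarrow> bool) \<Rightarrow> 'v \<Rightarrow> (nat \<Rightarrow> 'v) set" where
  "inf_saw E r0 = {P. P 0 = r0 \<and> inj P \<and> (\<forall>i. E (P i) (P (Suc i)))}"

definition fin_saw :: "('v \<Rightarrow> 'v \<Rightarrow> bool) \<Rightarrow> 'v \<Rightarrow> nat \<Rightarrow> 'v list set" where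
  "fin_saw E r0 m = {ps. length ps = m \<and> ps \<noteq> [] \<and> hd ps = r0 \<and> distinct ps \<and>
                       (\<forall>i. Suc i < m \<longrightarrow> E (ps ! i) (ps ! Suc i))}"

definition path_space :: "(nat \<Rightarrow> 'v) measure" where
  "path_space = PiM UNIV (\<lambda>_. count_space UNIV)"

definition num_common :: "(nat \<Rightarrow> 'v) \<Rightarrow> (nat \<Rightarrow> 'v) \<Rightarrow> enat" where
  "num_common P P' = (if finite (range P \<inter> range P') then enat (card (range P \<inter> range P')) else \<infinity>)"

definition exp_intersection_tail :: "(nat \<Rightarrow> 'v) measure \<Rightarrow> real \<Rightarrow> bool" where
  "exp_intersection_tail \<pi> \<eta> \<longleftrightarrow>
     (\<exists>C>0. \<forall>k\<ge>1. measure (\<pi> \<Otimes>\<^sub>M \<pi>) {(P, P'). enat k \<le> num_common P P'} \<le> C * \<eta> ^ k)"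

text \<open>Pearson chi-square distance: variance under F0 of L = dF1/dF0
  (as an extended nonnegative real, so that it may be infinite).\<close>
definition chi2 :: "real measure \<Rightarrow> real measure \<Rightarrow> ennreal" where
  "chi2 F0 F1 = (let L = (\<lambda>x. enn2real (RN_deriv F0 F1 x)) in
       \<integral>\<^sup>+ x. ennreal ((L x - (\<integral> y. L y \<partial>F0))\<^sup>2) \<partial>F0)"

definition law0 :: "real measure \<Rightarrow> ('v \<Rightarrow> real) measure" where
  "law0 F0 = PiM UNIV (\<lambda>_. F0)"

definition law1 :: "real measure \<Rightarrow> real measure \<Rightarrow> 'v list \<Rightarrow> ('v \<Rightarrow> real) measure" where
  "law1 F0 F1 p = PiM UNIV (\<lambda>v. if v \<in> set p then F1 else F0)"

definition is_test :: "(('v \<Rightarrow> real) \<Rightarrow> bool) \<Rightarrow> bool" where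
  "is_test T \<longleftrightarrow> T \<in> measurable (PiM UNIV (\<lambda>_::'v. borel)) (count_space UNIV)"

text \<open>Minimax risk; T x = True means the test outputs 1 (reject H0).\<close>
definition risk :: "('v \<Rightarrow> 'v \<Rightarrow> bool) \<Rightarrow> 'v \<Rightarrow> real measure \<Rightarrow> real measure \<Rightarrow> nat
                    \<Rightarrow> (('v \<Rightarrow> real) \<Rightarrow> bool) \<Rightarrow> real" where
  "risk E r0 F0 F1 m T =
     measure (law0 F0) {x \<in> space (law0 F0). T x}
     + (SUP p \<in> fin_saw E r0 m. measure (law1 F0 F1 p) {x \<in> space (law1 F0 F1 p). \<not> T x})"

end

theory Submission
  imports Defs
begin

(* Second moment method. Let L_m be the likelihood ratio, against the null law, of the mixture
   over pi of the alternatives supported on the first m vertices of a random path. The mixture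
   gives the rejection region A of a test with risk rho mass at least 1 - rho, so by
   Cauchy-Schwarz (1 - rho)^2 <= E_0[L_m^2] P_0(A) <= E_0[L_m^2] rho. For independent paths
   P, P' one has E_0[L_m^2] = E[(1 + chi^2)^N_m], where N_m is at most the number N of common
   vertices, and the exponential intersection tail makes E[(1 + chi^2)^N] finite because
   (1 + chi^2) eta < 1. So the risk is bounded away from 0 uniformly in m. *)

subsection \<open>Product measures and likelihood ratios\<close>

lemma (in product_prob_space) nn_integral_PiM_prod:
  assumes K: "finite K" "K \<subseteq> I" and g: "\<And>j. j \<in> K \<Longrightarrow> g j \<in> borel_measurable (M j)"
  shows "(\<integral>\<^sup>+x. (\<Prod>j\<in>K. g j (x j)) \<partial>PiM I M) = (\<Prod>j\<in>K. \<integral>\<^sup>+y. g j y \<partial>M j)"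
proof -
  have "(\<integral>\<^sup>+x. (\<Prod>j\<in>K. g j (x j)) \<partial>PiM I M) = (\<integral>\<^sup>+x. (\<Prod>j\<in>K. g j (restrict x K j)) \<partial>PiM I M)"
    by (intro nn_integral_cong prod.cong) auto
  also have "\<dots> = (\<integral>\<^sup>+y. (\<Prod>j\<in>K. g j (y j)) \<partial>distr (PiM I M) (PiM K M) (\<lambda>x. restrict x K))"
    using K g by (intro nn_integral_distr[symmetric] measurable_restrict_subset borel_measurable_prod_ennreal)
      (auto intro: measurable_compose[OF measurable_component_singleton])
  also have "\<dots> = (\<Prod>j\<in>K. \<integral>\<^sup>+y. g j y \<partial>M j)"
    using K g by (simp add: distr_PiM_restrict_finite product_nn_integral_prod)
  finally show ?thesis .
qed

definition likelihood_ratio :: "'a measure \<Rightarrow> 'a measure \<Rightarrow> 'v set \<Rightarrow> ('v \<Rightarrow> 'a) \<Rightarrow> ennreal" where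
  "likelihood_ratio F0 F1 S x = (\<Prod>v\<in>S. RN_deriv F0 F1 (x v))"

lemma borel_measurable_likelihood_ratio:
  assumes "finite S"
  shows "likelihood_ratio F0 F1 S \<in> borel_measurable (PiM UNIV (\<lambda>_. F0))"
  unfolding likelihood_ratio_def
  by (intro borel_measurable_prod_ennreal measurable_compose[OF measurable_component_singleton]) auto

lemma nn_integral_likelihood_ratio_cylinder:
  fixes F0 F1 :: "'a measure" and S J :: "'i set"
  assumes F0: "prob_space F0" and F1: "prob_space F1" and sets_eq: "sets F1 = sets F0"
    and ac: "absolutely_continuous F0 F1" and S: "finite S" and J: "finite J"
    and F: "\<And>j. j \<in> J \<Longrightarrow> F j \<in> sets F0"
  shows "(\<integral>\<^sup>+x. likelihood_ratio F0 F1 S x * (\<Prod>j\<in>J. indicator (F j) (x j)) \<partial>PiM UNIV (\<lambda>_. F0))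
       = (\<Prod>j\<in>J. emeasure (if j \<in> S then F1 else F0) (F j))"
proof -
  interpret F0: prob_space F0 by (rule F0)
  define G where "G j = (if j \<in> J then F j else space F0)" for j
  define g where "g j y = (if j \<in> S then RN_deriv F0 F1 y else 1) * indicator (G j) y" for j y
  have G: "G j \<in> sets F0" for j using F by (auto simp: G_def)
  have "(\<integral>\<^sup>+x. likelihood_ratio F0 F1 S x * (\<Prod>j\<in>J. indicator (F j) (x j)) \<partial>PiM UNIV (\<lambda>_. F0))
      = (\<integral>\<^sup>+x. (\<Prod>j\<in>J \<union> S. g j (x j)) \<partial>PiM UNIV (\<lambda>_. F0))"
  proof (rule nn_integral_cong)
    fix x :: "'i \<Rightarrow> 'a" assume "x \<in> space (PiM UNIV (\<lambda>_. F0))"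
    then have x: "x j \<in> space F0" for j by (auto simp: space_PiM)
    have "(\<Prod>j\<in>J \<union> S. g j (x j))
        = (\<Prod>j\<in>J \<union> S. if j \<in> S then RN_deriv F0 F1 (x j) else 1) * (\<Prod>j\<in>J \<union> S. indicator (G j) (x j))"
      unfolding g_def by (rule prod.distrib)
    also have "(\<Prod>j\<in>J \<union> S. if j \<in> S then RN_deriv F0 F1 (x j) else 1) = likelihood_ratio F0 F1 S x"
      using J S by (simp add: prod.If_cases Int_absorb1 likelihood_ratio_def)
    also have "(\<Prod>j\<in>J \<union> S. indicator (G j) (x j)) = (\<Prod>j\<in>J. indicator (G j) (x j) :: ennreal)"
      using J S x by (intro prod.mono_neutral_right) (auto simp: G_def)
    finally show "likelihood_ratio F0 F1 S x * (\<Prod>j\<in>J. indicator (F j) (x j)) = (\<Prod>j\<in>J \<union> S. g j (x j))"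
      by (simp add: G_def)
  qed
  also have "\<dots> = (\<Prod>j\<in>J \<union> S. \<integral>\<^sup>+y. g j y \<partial>F0)"
    using J S G by (intro product_prob_space.nn_integral_PiM_prod) (auto intro: product_prob_spaceI F0 simp: g_def)
  also have "\<dots> = (\<Prod>j\<in>J \<union> S. emeasure (if j \<in> S then F1 else F0) (G j))"
  proof (rule prod.cong)
    fix j
    show "(\<integral>\<^sup>+y. g j y \<partial>F0) = emeasure (if j \<in> S then F1 else F0) (G j)"
      using G F0.RN_deriv_nn_integral[OF ac sets_eq, of "indicator (G j)"] sets_eq by (simp add: g_def)
  qed simp
  also have "\<dots> = (\<Prod>j\<in>J. emeasure (if j \<in> S then F1 else F0) (G j))"
    using J S by (intro prod.mono_neutral_right) (auto simp: G_def prob_space.emeasure_space_1[OF F1]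
      F0.emeasure_space_1 sets_eq_imp_space_eq[OF sets_eq, symmetric])
  finally show ?thesis by (simp add: G_def)
qed

lemma PiM_if_eq_density:
  assumes F0: "prob_space F0" and F1: "prob_space F1" and sets_eq: "sets F1 = sets F0"
    and ac: "absolutely_continuous F0 F1" and S: "finite S"
  shows "PiM UNIV (\<lambda>v. if v \<in> S then F1 else F0) = density (PiM UNIV (\<lambda>_. F0)) (likelihood_ratio F0 F1 S)"
    (is "PiM UNIV ?M = density ?P0 ?f")
proof -
  interpret product_prob_space ?M UNIV
    by (rule product_prob_spaceI) (simp add: F0 F1)
  have sets_M: "sets (?M v) = sets F0" and space_M: "space (?M v) = space F0" for v
    using sets_eq sets_eq_imp_space_eq[OF sets_eq] by auto
  have sets_P0: "sets ?P0 = sets (PiM UNIV ?M)"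
    by (rule sets_PiM_cong) (auto simp: sets_M)
  show ?thesis
  proof (rule PiM_eq[symmetric])
    show "sets (density ?P0 ?f) = sets (PiM UNIV ?M)" using sets_P0 by simp
  next
    fix J F assume J: "finite J" and F: "\<And>j. j \<in> J \<Longrightarrow> F j \<in> sets (?M j)"
    have "emeasure (density ?P0 ?f) (prod_emb UNIV ?M J (Pi\<^sub>E J F))
        = (\<integral>\<^sup>+x. ?f x * indicator (prod_emb UNIV ?M J (Pi\<^sub>E J F)) x \<partial>?P0)"
      using J F S sets_P0 borel_measurable_likelihood_ratio
      by (intro emeasure_density) (auto intro!: measurable_prod_emb sets_PiM_I_finite)
    also have "\<dots> = (\<integral>\<^sup>+x. ?f x * (\<Prod>j\<in>J. indicator (F j) (x j)) \<partial>?P0)"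
      using J by (intro nn_integral_cong) (auto simp: prod_emb_def space_M space_PiM indicator_def PiE_iff)
    also have "\<dots> = (\<Prod>j\<in>J. emeasure (?M j) (F j))"
      using F sets_M by (intro nn_integral_likelihood_ratio_cylinder[OF assms J]) auto
    finally show "emeasure (density ?P0 ?f) (prod_emb UNIV ?M J (Pi\<^sub>E J F)) = (\<Prod>j\<in>J. emeasure (?M j) (F j))" .
  qed
qed

lemma nn_integral_RN_deriv_eq_1:
  assumes "prob_space F0" "prob_space F1" "sets F1 = sets F0" "absolutely_continuous F0 F1"
  shows "(\<integral>\<^sup>+y. RN_deriv F0 F1 y \<partial>F0) = 1"
  using sigma_finite_measure.RN_deriv_nn_integral[OF prob_space_imp_sigma_finite, of F0 F1 "\<lambda>_. 1"]
    prob_space.emeasure_space_1[of F1] assms by simp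

lemma nn_integral_likelihood_ratio_mult:
  assumes F0: "prob_space F0" and "prob_space F1" "sets F1 = sets F0" "absolutely_continuous F0 F1"
    and S: "finite S" "finite S'"
  shows "(\<integral>\<^sup>+x. likelihood_ratio F0 F1 S x * likelihood_ratio F0 F1 S' x \<partial>PiM UNIV (\<lambda>_. F0))
       = (\<integral>\<^sup>+y. RN_deriv F0 F1 y ^ 2 \<partial>F0) ^ card (S \<inter> S')"
proof -
  let ?r = "RN_deriv F0 F1"
  define g where "g j y = ?r y * (if j \<in> S \<inter> S' then ?r y else 1)" for j y
  have "likelihood_ratio F0 F1 S x * likelihood_ratio F0 F1 S' x = (\<Prod>j\<in>S \<union> S'. g j (x j))" for x
  proof -
    have "likelihood_ratio F0 F1 S x * likelihood_ratio F0 F1 S' x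
        = (\<Prod>v\<in>S \<union> S'. ?r (x v)) * (\<Prod>v\<in>S \<inter> S'. ?r (x v))"
      unfolding likelihood_ratio_def using S by (rule prod.union_inter[symmetric])
    also have "(\<Prod>v\<in>S \<inter> S'. ?r (x v)) = (\<Prod>j\<in>S \<union> S'. if j \<in> S \<inter> S' then ?r (x j) else 1)"
      using S by (simp add: prod.If_cases) (auto intro!: arg_cong2[where f=prod])
    finally show ?thesis unfolding g_def by (simp add: prod.distrib)
  qed
  then have "(\<integral>\<^sup>+x. likelihood_ratio F0 F1 S x * likelihood_ratio F0 F1 S' x \<partial>PiM UNIV (\<lambda>_. F0))
      = (\<integral>\<^sup>+x. (\<Prod>j\<in>S \<union> S'. g j (x j)) \<partial>PiM UNIV (\<lambda>_. F0))"
    by simp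
  also have "\<dots> = (\<Prod>j\<in>S \<union> S'. \<integral>\<^sup>+y. g j y \<partial>F0)"
    using S by (intro product_prob_space.nn_integral_PiM_prod[OF product_prob_spaceI]) (auto simp: F0 g_def)
  also have "\<dots> = (\<Prod>j\<in>S \<union> S'. if j \<in> S \<inter> S' then \<integral>\<^sup>+y. ?r y ^ 2 \<partial>F0 else 1)"
    using nn_integral_RN_deriv_eq_1[OF assms(1-4)] by (intro prod.cong) (auto simp: g_def power2_eq_square)
  also have "\<dots> = (\<Prod>j\<in>S \<inter> S'. \<integral>\<^sup>+y. ?r y ^ 2 \<partial>F0)"
    using S by (intro prod.mono_neutral_cong_right) auto
  also have "\<dots> = (\<integral>\<^sup>+y. ?r y ^ 2 \<partial>F0) ^ card (S \<inter> S')"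
    by simp
  finally show ?thesis .
qed

lemma nn_integral_RN_deriv_square_eq_chi2:
  fixes F0 F1 :: "real measure"
  assumes F0: "prob_space F0" and F1: "prob_space F1" and sets_eq: "sets F1 = sets F0"
    and ac: "absolutely_continuous F0 F1"
  shows "(\<integral>\<^sup>+y. RN_deriv F0 F1 y ^ 2 \<partial>F0) = 1 + chi2 F0 F1"
proof -
  interpret F0: prob_space F0 by (rule F0)
  define L where "L x = enn2real (RN_deriv F0 F1 x)" for x
  have RN_eq_L: "AE x in F0. RN_deriv F0 F1 x = ennreal (L x)"
    using F0.RN_deriv_finite[OF prob_space_imp_sigma_finite[OF F1] ac sets_eq]
    by eventually_elim (simp add: L_def less_top)
  have L_nonneg: "0 \<le> L x" for x by (simp add: L_def)
  have [measurable]: "L \<in> borel_measurable F0" unfolding L_def by measurable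
  have nn_integral_L: "(\<integral>\<^sup>+x. ennreal (L x) \<partial>F0) = 1"
    using nn_integral_cong_AE[OF RN_eq_L] nn_integral_RN_deriv_eq_1[OF assms] by simp
  then have "(\<integral>x. L x \<partial>F0) = 1"
    by (subst integral_eq_nn_integral) (auto simp: L_def)
  then have chi2_L: "chi2 F0 F1 = (\<integral>\<^sup>+x. ennreal ((L x - 1)\<^sup>2) \<partial>F0)"
    unfolding chi2_def L_def Let_def by simp
  have pointwise: "ennreal ((L x)\<^sup>2) + 1 = ennreal ((L x - 1)\<^sup>2) + 2 * ennreal (L x)" for x
  proof -
    have "ennreal ((L x)\<^sup>2) + 1 = ennreal ((L x - 1)\<^sup>2 + 2 * L x)"
      by (simp add: power2_eq_square algebra_simps)
    also have "\<dots> = ennreal ((L x - 1)\<^sup>2) + 2 * ennreal (L x)"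
      by (simp add: L_def ennreal_plus ennreal_mult)
    finally show ?thesis .
  qed
  have "(\<integral>\<^sup>+x. ennreal ((L x)\<^sup>2) \<partial>F0) + 1 = (\<integral>\<^sup>+x. ennreal ((L x)\<^sup>2) + 1 \<partial>F0)"
    by (subst nn_integral_add) (auto simp: F0.emeasure_space_1)
  also have "\<dots> = (\<integral>\<^sup>+x. ennreal ((L x - 1)\<^sup>2) + 2 * ennreal (L x) \<partial>F0)"
    by (simp only: pointwise)
  also have "\<dots> = (1 + chi2 F0 F1) + 1"
    by (subst nn_integral_add) (auto simp: chi2_L nn_integral_cmult nn_integral_L one_add_one add.commute)
  finally have "(\<integral>\<^sup>+x. ennreal ((L x)\<^sup>2) \<partial>F0) = 1 + chi2 F0 F1"
    by (simp add: ennreal_add_left_cancel add.commute[of _ 1])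
  moreover have "(\<integral>\<^sup>+y. RN_deriv F0 F1 y ^ 2 \<partial>F0) = (\<integral>\<^sup>+x. ennreal ((L x)\<^sup>2) \<partial>F0)"
    using RN_eq_L by (intro nn_integral_cong_AE) (auto elim!: eventually_mono simp: ennreal_power L_nonneg)
  ultimately show ?thesis by simp
qed

subsection \<open>Self-avoiding paths and their common vertices\<close>

definition path_prefix :: "nat \<Rightarrow> (nat \<Rightarrow> 'v) \<Rightarrow> 'v list" where
  "path_prefix m P = map P [0..<m]"

lemma path_prefix_in_fin_saw:
  assumes "P \<in> inf_saw E r0" "0 < m"
  shows "path_prefix m P \<in> fin_saw E r0 m"
  using assms by (auto simp: inf_saw_def fin_saw_def path_prefix_def hd_map distinct_map
      intro: inj_on_subset)

lemma card_common_path_prefix_le_num_common: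
  "enat (card (set (path_prefix m P) \<inter> set (path_prefix m P'))) \<le> num_common P P'"
proof (cases "finite (range P \<inter> range P')")
  case True
  then have "card (set (path_prefix m P) \<inter> set (path_prefix m P')) \<le> card (range P \<inter> range P')"
    by (rule card_mono) (auto simp: path_prefix_def)
  then show ?thesis using True by (simp add: num_common_def)
qed (simp add: num_common_def)

lemma enat_le_num_common_iff:
  "enat k \<le> num_common P P' \<longleftrightarrow> (\<exists>S \<subseteq> range P \<inter> range P'. finite S \<and> card S = k)"
proof (cases "finite (range P \<inter> range P')")
  case True
  show ?thesis
  proof
    assume "enat k \<le> num_common P P'"
    then have "k \<le> card (range P \<inter> range P')" using True by (simp add: num_common_def)
    then show "\<exists>S \<subseteq> range P \<inter> range P'. finite S \<and> card S = k"
      by (metis obtain_subset_with_card_n)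
  next
    assume "\<exists>S \<subseteq> range P \<inter> range P'. finite S \<and> card S = k"
    then obtain S where "S \<subseteq> range P \<inter> range P'" "card S = k" by blast
    then have "k \<le> card (range P \<inter> range P')" using card_mono[OF True] by blast
    then show "enat k \<le> num_common P P'" using True by (simp add: num_common_def)
  qed
next
  case False
  then show ?thesis using infinite_arbitrarily_large[OF False, of k] by (simp add: num_common_def) blast
qed

lemma measurable_path_prefix:
  "path_prefix m \<in> measurable (path_space :: (nat \<Rightarrow> 'v::countable) measure) (count_space UNIV)"
proof (induction m)
  case 0
  show ?case by (simp add: path_prefix_def)
next
  case (Suc m)
  have "(\<lambda>P. l @ [P m]) \<in> measurable (path_space :: (nat \<Rightarrow> 'v) measure) (count_space UNIV)" for l
    unfolding path_space_def by measurable
  then have "(\<lambda>P. path_prefix m P @ [P m]) \<in> measurable (path_space :: (nat \<Rightarrow> 'v) measure) (count_space UNIV)"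
    by (rule measurable_compose_countable[where f="\<lambda>l P. l @ [P m]", OF _ Suc.IH])
  moreover have "path_prefix (Suc m) = (\<lambda>P :: nat \<Rightarrow> 'v. path_prefix m P @ [P m])"
    by (auto simp: path_prefix_def)
  ultimately show ?case by simp
qed

lemma sets_num_common_ge:
  "{(P, P'). enat k \<le> num_common P P'} \<in> sets (path_space \<Otimes>\<^sub>M (path_space :: (nat \<Rightarrow> 'v::countable) measure))"
proof -
  let ?M = "path_space \<Otimes>\<^sub>M (path_space :: (nat \<Rightarrow> 'v) measure)"
  have space_M: "space ?M = UNIV"
    by (simp add: space_pair_measure path_space_def space_PiM)
  have "{(P, P'). enat k \<le> num_common P P'}
      = {z \<in> space ?M. \<exists>S \<in> {S. finite S \<and> card S = k}. \<forall>s\<in>S. (\<exists>i. s = fst z i) \<and> (\<exists>i. s = snd z i)}"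
  proof (intro set_eqI)
    fix z :: "(nat \<Rightarrow> 'v) \<times> (nat \<Rightarrow> 'v)"
    have range_iff: "S \<subseteq> range (fst z) \<inter> range (snd z) \<longleftrightarrow> (\<forall>s\<in>S. (\<exists>i. s = fst z i) \<and> (\<exists>i. s = snd z i))" for S
      by (simp add: subset_eq image_iff)
    have "z \<in> {(P, P'). enat k \<le> num_common P P'} \<longleftrightarrow> enat k \<le> num_common (fst z) (snd z)"
      by (simp add: case_prod_beta)
    also have "\<dots> \<longleftrightarrow> (\<exists>S \<in> {S. finite S \<and> card S = k}. S \<subseteq> range (fst z) \<inter> range (snd z))"
      unfolding enat_le_num_common_iff by blast
    also have "\<dots> \<longleftrightarrow> z \<in> {z \<in> space ?M. \<exists>S \<in> {S. finite S \<and> card S = k}. \<forall>s\<in>S. (\<exists>i. s = fst z i) \<and> (\<exists>i. s = snd z i)}"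
      unfolding range_iff space_M by simp
    finally show "z \<in> {(P, P'). enat k \<le> num_common P P'} \<longleftrightarrow> z \<in> {z \<in> space ?M. \<exists>S \<in> {S. finite S \<and> card S = k}. \<forall>s\<in>S. (\<exists>i. s = fst z i) \<and> (\<exists>i. s = snd z i)}" .
  qed
  also have "\<dots> \<in> sets ?M"
  proof (rule sets.sets_Collect_countable_Ex')
    show "countable {S::'v set. finite S \<and> card S = k}"
      by (rule countable_subset[OF _ countable_Collect_finite]) auto
    fix S :: "'v set"
    have [measurable]: "(\<lambda>z. fst z i) \<in> measurable ?M (count_space UNIV)" for i
      unfolding path_space_def by measurable
    have [measurable]: "(\<lambda>z. snd z i) \<in> measurable ?M (count_space UNIV)" for i
      unfolding path_space_def by measurable
    have "Measurable.pred ?M (\<lambda>z. \<forall>s\<in>S. (\<exists>i. s = fst z i) \<and> (\<exists>i. s = snd z i))"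
      by measurable
    then show "{z \<in> space ?M. \<forall>s\<in>S. (\<exists>i. s = fst z i) \<and> (\<exists>i. s = snd z i)} \<in> sets ?M"
      by (simp add: pred_def)
  qed
  finally show ?thesis .
qed

lemma borel_measurable_likelihood_ratio_path_prefix:
  fixes g :: "'a \<Rightarrow> nat \<Rightarrow> 'v::countable"
  assumes g: "g \<in> measurable N path_space" and h: "h \<in> measurable N (PiM UNIV (\<lambda>_. F0))"
  shows "(\<lambda>w. likelihood_ratio F0 F1 (set (path_prefix m (g w))) (h w)) \<in> borel_measurable N"
  using measurable_compose[OF h borel_measurable_likelihood_ratio] measurable_compose[OF g measurable_path_prefix]
  by (rule measurable_compose_countable) simp

subsection \<open>Exponential moments of the number of common vertices\<close>

(* Q ^ N as the layer-cake sum 1 + (SUM k < N. Q ^ (k + 1) - Q ^ k): this extends it to N = \<infinity>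
   and integrates termwise against the tail probabilities of N. *)
definition enat_power :: "real \<Rightarrow> enat \<Rightarrow> ennreal" where
  "enat_power Q N = 1 + (\<Sum>k. ennreal (Q ^ Suc k - Q ^ k) * (if enat (Suc k) \<le> N then 1 else 0))"

lemma enat_power_enat:
  assumes "1 \<le> Q"
  shows "enat_power Q (enat n) = ennreal (Q ^ n)"
proof -
  have increasing: "Q ^ k \<le> Q ^ Suc k" for k
    using assms by (simp add: power_increasing)
  have "(\<Sum>k. ennreal (Q ^ Suc k - Q ^ k) * (if enat (Suc k) \<le> enat n then 1 else 0))
      = (\<Sum>k<n. ennreal (Q ^ Suc k - Q ^ k))"
    by (subst suminf_finite[of "{..<n}"]) auto
  also have "\<dots> = ennreal (\<Sum>k<n. Q ^ Suc k - Q ^ k)"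
    using increasing by (intro sum_ennreal) auto
  also have "(\<Sum>k<n. Q ^ Suc k - Q ^ k) = Q ^ n - 1"
    using sum_lessThan_telescope[of "(^) Q" n] by simp
  finally show ?thesis
    using one_le_power[OF assms, of n] ennreal_plus[of 1 "Q ^ n - 1"] by (simp add: enat_power_def)
qed

lemma enat_power_mono:
  assumes "N \<le> N'"
  shows "enat_power Q N \<le> enat_power Q N'"
  unfolding enat_power_def
  using assms by (intro add_left_mono suminf_le) (auto intro: summableI order.trans)

lemma nn_integral_enat_power:
  assumes \<mu>: "prob_space \<mu>" and N: "\<And>k. {z \<in> space \<mu>. enat k \<le> N z} \<in> sets \<mu>"
  shows "(\<integral>\<^sup>+z. enat_power Q (N z) \<partial>\<mu>)
    = 1 + (\<Sum>k. ennreal (Q ^ Suc k - Q ^ k) * emeasure \<mu> {z \<in> space \<mu>. enat (Suc k) \<le> N z})"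
proof -
  interpret prob_space \<mu> by (rule \<mu>)
  have [measurable]: "Measurable.pred \<mu> (\<lambda>z. enat k \<le> N z)" for k
    using N by (simp add: pred_def)
  have "(\<integral>\<^sup>+z. enat_power Q (N z) \<partial>\<mu>)
      = 1 + (\<integral>\<^sup>+z. (\<Sum>k. ennreal (Q ^ Suc k - Q ^ k) * (if enat (Suc k) \<le> N z then 1 else 0)) \<partial>\<mu>)"
    unfolding enat_power_def by (subst nn_integral_add) (auto simp: emeasure_space_1)
  also have "\<dots> = 1 + (\<Sum>k. \<integral>\<^sup>+z. ennreal (Q ^ Suc k - Q ^ k) * indicator {z \<in> space \<mu>. enat (Suc k) \<le> N z} z \<partial>\<mu>)"
    by (subst nn_integral_suminf) (auto intro!: suminf_cong nn_integral_cong simp: indicator_def)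
  finally show ?thesis
    by (simp add: nn_integral_cmult_indicator)
qed

lemma nn_integral_enat_power_le:
  assumes \<mu>: "prob_space \<mu>" and N: "\<And>k. {z \<in> space \<mu>. enat k \<le> N z} \<in> sets \<mu>"
    and Q: "1 \<le> Q" "Q * \<eta> < 1" and \<eta>: "0 \<le> \<eta>" and C: "0 \<le> C"
    and tail: "\<And>k. 1 \<le> k \<Longrightarrow> measure \<mu> {z \<in> space \<mu>. enat k \<le> N z} \<le> C * \<eta> ^ k"
  shows "(\<integral>\<^sup>+z. enat_power Q (N z) \<partial>\<mu>) \<le> ennreal (1 + (Q - 1) * C * \<eta> / (1 - Q * \<eta>))"
proof -
  interpret prob_space \<mu> by (rule \<mu>)
  let ?A = "\<lambda>k. {z \<in> space \<mu>. enat k \<le> N z}"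
  have increasing: "Q ^ k \<le> Q ^ Suc k" for k
    using Q by (simp add: power_increasing)
  have "(\<integral>\<^sup>+z. enat_power Q (N z) \<partial>\<mu>) = 1 + (\<Sum>k. ennreal (Q ^ Suc k - Q ^ k) * emeasure \<mu> (?A (Suc k)))"
    by (rule nn_integral_enat_power[OF \<mu> N])
  also have "\<dots> \<le> 1 + (\<Sum>k. ennreal ((Q - 1) * C * \<eta> * (Q * \<eta>) ^ k))"
  proof (intro add_left_mono suminf_le)
    fix k
    have "ennreal (Q ^ Suc k - Q ^ k) * emeasure \<mu> (?A (Suc k))
        = ennreal ((Q ^ Suc k - Q ^ k) * measure \<mu> (?A (Suc k)))"
      using increasing by (simp add: emeasure_eq_measure ennreal_mult)
    also have "\<dots> \<le> ennreal ((Q ^ Suc k - Q ^ k) * (C * \<eta> ^ Suc k))"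
      using increasing tail[of "Suc k"] by (intro ennreal_leI mult_left_mono) auto
    also have "(Q ^ Suc k - Q ^ k) * (C * \<eta> ^ Suc k) = (Q - 1) * C * \<eta> * (Q * \<eta>) ^ k"
      by (simp add: power_mult_distrib algebra_simps)
    finally show "ennreal (Q ^ Suc k - Q ^ k) * emeasure \<mu> (?A (Suc k)) \<le> ennreal ((Q - 1) * C * \<eta> * (Q * \<eta>) ^ k)" .
  qed (auto intro: summableI)
  also have "(\<Sum>k. ennreal ((Q - 1) * C * \<eta> * (Q * \<eta>) ^ k)) = ennreal ((Q - 1) * C * \<eta> / (1 - Q * \<eta>))"
  proof -
    have geometric: "(\<lambda>k. (Q - 1) * C * \<eta> * (Q * \<eta>) ^ k) sums ((Q - 1) * C * \<eta> * (1 / (1 - Q * \<eta>)))"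
      using Q \<eta> by (intro sums_mult geometric_sums) simp
    then have "(\<Sum>k. (Q - 1) * C * \<eta> * (Q * \<eta>) ^ k) = (Q - 1) * C * \<eta> / (1 - Q * \<eta>)"
      by (simp add: sums_iff)
    then show ?thesis
      using Q \<eta> C sums_summable[OF geometric] by (subst suminf_ennreal2) auto
  qed
  also have "1 + ennreal ((Q - 1) * C * \<eta> / (1 - Q * \<eta>)) = ennreal (1 + (Q - 1) * C * \<eta> / (1 - Q * \<eta>))"
    using Q \<eta> C by (simp add: ennreal_plus)
  finally show ?thesis .
qed

subsection \<open>Mixtures of alternatives along a random path\<close>

locale saw_prior =
  fixes E :: "'v::countable \<Rightarrow> 'v \<Rightarrow> bool" and r0 :: 'v
    and F0 F1 :: "real measure" and \<pi> :: "(nat \<Rightarrow> 'v) measure"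
  assumes prob_space_F0: "prob_space F0" and prob_space_F1: "prob_space F1"
    and sets_F0: "sets F0 = sets borel" and sets_F1: "sets F1 = sets borel"
    and absolutely_continuous: "absolutely_continuous F0 F1"
    and prob_space_\<pi>: "prob_space \<pi>" and sets_\<pi>: "sets \<pi> = sets path_space"
    and AE_inf_saw: "AE P in \<pi>. P \<in> inf_saw E r0"
begin

sublocale \<pi>: prob_space \<pi> by (rule prob_space_\<pi>)
sublocale law0: prob_space "law0 F0"
  unfolding law0_def by (rule prob_space_PiM) (rule prob_space_F0)
sublocale \<pi>\<pi>: pair_prob_space \<pi> \<pi> ..
sublocale law0_\<pi>: pair_prob_space "law0 F0" \<pi> ..
sublocale \<pi>\<pi>_law0: pair_prob_space "\<pi> \<Otimes>\<^sub>M \<pi>" "law0 F0" ..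

lemma space_law0: "space (law0 F0) = UNIV"
  using sets_eq_imp_space_eq[OF sets_F0] by (simp add: law0_def space_PiM PiE_UNIV_domain)

lemma law1_eq_density: "law1 F0 F1 p = density (law0 F0) (likelihood_ratio F0 F1 (set p))"
  unfolding law1_def law0_def using prob_space_F0 prob_space_F1 sets_F0 sets_F1 absolutely_continuous
  by (intro PiM_if_eq_density) simp_all

lemma prob_space_law1: "prob_space (law1 F0 F1 p)"
  unfolding law1_def by (rule prob_space_PiM) (simp add: prob_space_F0 prob_space_F1)

lemma emeasure_law1:
  assumes "A \<in> sets (law0 F0)"
  shows "emeasure (law1 F0 F1 p) A = (\<integral>\<^sup>+x. likelihood_ratio F0 F1 (set p) x * indicator A x \<partial>law0 F0)"
  unfolding law1_eq_density using assms
  by (intro emeasure_density) (simp_all add: law0_def borel_measurable_likelihood_ratio)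

lemma measurable_into_path_space: "measurable M path_space = measurable M \<pi>"
  by (rule measurable_cong_sets[OF refl sets_\<pi>[symmetric]])

lemma borel_measurable_likelihood_ratio_path_prefix_pair [measurable]:
  "(\<lambda>w. likelihood_ratio F0 F1 (set (path_prefix m (snd w))) (fst w)) \<in> borel_measurable (law0 F0 \<Otimes>\<^sub>M \<pi>)"
  using borel_measurable_likelihood_ratio_path_prefix[of snd "law0 F0 \<Otimes>\<^sub>M \<pi>" fst F0 F1 m]
  by (simp add: law0_def measurable_into_path_space)

lemma borel_measurable_likelihood_ratio_path_prefix_at:
  "(\<lambda>P. likelihood_ratio F0 F1 (set (path_prefix m P)) x) \<in> borel_measurable \<pi>"
  "(\<lambda>z. likelihood_ratio F0 F1 (set (path_prefix m (fst z))) x * likelihood_ratio F0 F1 (set (path_prefix m (snd z))) x)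
     \<in> borel_measurable (\<pi> \<Otimes>\<^sub>M \<pi>)"
  using space_law0 unfolding law0_def
  by (auto intro!: borel_measurable_likelihood_ratio_path_prefix borel_measurable_times_ennreal measurable_const
      simp: measurable_into_path_space measurable_ident_sets)

definition mixture_lr :: "nat \<Rightarrow> ('v \<Rightarrow> real) \<Rightarrow> ennreal" where
  "mixture_lr m x = (\<integral>\<^sup>+P. likelihood_ratio F0 F1 (set (path_prefix m P)) x \<partial>\<pi>)"

lemma borel_measurable_mixture_lr: "mixture_lr m \<in> borel_measurable (law0 F0)"
  unfolding mixture_lr_def[abs_def]
  using \<pi>.borel_measurable_nn_integral[of "\<lambda>x P. likelihood_ratio F0 F1 (set (path_prefix m P)) x"]
  by (simp add: case_prod_beta')

lemma nn_integral_mixture_lr_indicator_ge: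
  assumes A: "A \<in> sets (law0 F0)" and m: "0 < m"
    and \<rho>: "\<And>p. p \<in> fin_saw E r0 m \<Longrightarrow> 1 - \<rho> \<le> measure (law1 F0 F1 p) A"
  shows "ennreal (1 - \<rho>) \<le> (\<integral>\<^sup>+x. mixture_lr m x * indicator A x \<partial>law0 F0)"
proof -
  let ?f = "\<lambda>P x. likelihood_ratio F0 F1 (set (path_prefix m P)) x"
  have "ennreal (1 - \<rho>) \<le> emeasure (law1 F0 F1 p) A" if "p \<in> fin_saw E r0 m" for p
  proof -
    interpret law1: prob_space "law1 F0 F1 p" by (rule prob_space_law1)
    show ?thesis using \<rho>[OF that] by (simp add: law1.emeasure_eq_measure ennreal_leI)
  qed
  then have lower: "ennreal (1 - \<rho>) \<le> (\<integral>\<^sup>+x. ?f P x * indicator A x \<partial>law0 F0)"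
    if "P \<in> inf_saw E r0" for P
    using path_prefix_in_fin_saw[OF that m] A by (simp add: emeasure_law1)
  have "ennreal (1 - \<rho>) = (\<integral>\<^sup>+P. ennreal (1 - \<rho>) \<partial>\<pi>)"
    by (simp add: \<pi>.emeasure_space_1)
  also have "\<dots> \<le> (\<integral>\<^sup>+P. (\<integral>\<^sup>+x. ?f P x * indicator A x \<partial>law0 F0) \<partial>\<pi>)"
    using AE_inf_saw by (intro nn_integral_mono_AE) (auto elim: eventually_mono intro: lower)
  also have "\<dots> = (\<integral>\<^sup>+x. (\<integral>\<^sup>+P. ?f P x * indicator A x \<partial>\<pi>) \<partial>law0 F0)"
    using A by (intro law0_\<pi>.Fubini') (simp add: case_prod_beta')
  also have "\<dots> = (\<integral>\<^sup>+x. mixture_lr m x * indicator A x \<partial>law0 F0)"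
    unfolding mixture_lr_def
    by (intro nn_integral_cong nn_integral_multc borel_measurable_likelihood_ratio_path_prefix_at)
  finally show ?thesis .
qed

lemma nn_integral_mixture_lr_square_le:
  assumes c: "chi2 F0 F1 = ennreal c" "0 \<le> c"
  shows "(\<integral>\<^sup>+x. mixture_lr m x ^ 2 \<partial>law0 F0)
    \<le> (\<integral>\<^sup>+z. enat_power (1 + c) (num_common (fst z) (snd z)) \<partial>(\<pi> \<Otimes>\<^sub>M \<pi>))"
proof -
  let ?f = "\<lambda>P x. likelihood_ratio F0 F1 (set (path_prefix m P)) x"
  have square: "mixture_lr m x ^ 2 = (\<integral>\<^sup>+z. ?f (fst z) x * ?f (snd z) x \<partial>(\<pi> \<Otimes>\<^sub>M \<pi>))" for x
  proof -
    have "mixture_lr m x ^ 2 = (\<integral>\<^sup>+P. (\<integral>\<^sup>+P'. ?f P x * ?f P' x \<partial>\<pi>) \<partial>\<pi>)"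
      unfolding mixture_lr_def power2_eq_square
      by (simp add: nn_integral_cmult nn_integral_multc borel_measurable_likelihood_ratio_path_prefix_at)
    also have "\<dots> = (\<integral>\<^sup>+z. ?f (fst z) x * ?f (snd z) x \<partial>(\<pi> \<Otimes>\<^sub>M \<pi>))"
      using \<pi>.nn_integral_fst[OF borel_measurable_likelihood_ratio_path_prefix_at(2)] by simp
    finally show ?thesis .
  qed
  have "(\<integral>\<^sup>+x. mixture_lr m x ^ 2 \<partial>law0 F0)
      = (\<integral>\<^sup>+z. (\<integral>\<^sup>+x. ?f (fst z) x * ?f (snd z) x \<partial>law0 F0) \<partial>(\<pi> \<Otimes>\<^sub>M \<pi>))"
    unfolding square
  proof (intro \<pi>\<pi>_law0.Fubini')
    have "(\<lambda>w. ?f (fst (fst w)) (snd w)) \<in> borel_measurable ((\<pi> \<Otimes>\<^sub>M \<pi>) \<Otimes>\<^sub>M law0 F0)"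
      "(\<lambda>w. ?f (snd (fst w)) (snd w)) \<in> borel_measurable ((\<pi> \<Otimes>\<^sub>M \<pi>) \<Otimes>\<^sub>M law0 F0)"
      by (intro borel_measurable_likelihood_ratio_path_prefix; simp add: law0_def[symmetric] measurable_into_path_space)+
    then show "(\<lambda>(z, x). ?f (fst z) x * ?f (snd z) x) \<in> borel_measurable ((\<pi> \<Otimes>\<^sub>M \<pi>) \<Otimes>\<^sub>M law0 F0)"
      by (simp add: case_prod_beta')
  qed
  also have "\<dots> \<le> (\<integral>\<^sup>+z. enat_power (1 + c) (num_common (fst z) (snd z)) \<partial>(\<pi> \<Otimes>\<^sub>M \<pi>))"
  proof (intro nn_integral_mono)
    fix z :: "(nat \<Rightarrow> 'v) \<times> (nat \<Rightarrow> 'v)"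
    let ?N = "card (set (path_prefix m (fst z)) \<inter> set (path_prefix m (snd z)))"
    have "(\<integral>\<^sup>+x. ?f (fst z) x * ?f (snd z) x \<partial>law0 F0) = (1 + chi2 F0 F1) ^ ?N"
      using prob_space_F0 prob_space_F1 sets_F0 sets_F1 absolutely_continuous
      by (simp add: law0_def nn_integral_likelihood_ratio_mult nn_integral_RN_deriv_square_eq_chi2)
    also have "\<dots> = enat_power (1 + c) (enat ?N)"
      using c by (simp add: enat_power_enat flip: ennreal_power)
    also have "\<dots> \<le> enat_power (1 + c) (num_common (fst z) (snd z))"
      by (intro enat_power_mono card_common_path_prefix_le_num_common)
    finally show "(\<integral>\<^sup>+x. ?f (fst z) x * ?f (snd z) x \<partial>law0 F0) \<le> enat_power (1 + c) (num_common (fst z) (snd z))" .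
  qed
  finally show ?thesis .
qed

lemma nn_integral_mixture_lr_square_bound:
  assumes c: "chi2 F0 F1 = ennreal c" "0 \<le> c" and \<eta>: "0 \<le> \<eta>" "(1 + c) * \<eta> < 1" and C: "0 \<le> C"
    and tail: "\<And>k. 1 \<le> k \<Longrightarrow> measure (\<pi> \<Otimes>\<^sub>M \<pi>) {(P, P'). enat k \<le> num_common P P'} \<le> C * \<eta> ^ k"
  shows "(\<integral>\<^sup>+x. mixture_lr m x ^ 2 \<partial>law0 F0) \<le> ennreal (1 + c * C * \<eta> / (1 - (1 + c) * \<eta>))"
proof -
  have "space \<pi> = UNIV"
    using sets_eq_imp_space_eq[OF sets_\<pi>] by (simp add: path_space_def space_PiM PiE_UNIV_domain)
  then have tail_event: "{z \<in> space (\<pi> \<Otimes>\<^sub>M \<pi>). enat k \<le> num_common (fst z) (snd z)} = {(P, P'). enat k \<le> num_common P P'}"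
    for k by (auto simp: space_pair_measure)
  have "{(P, P'). enat k \<le> num_common P P'} \<in> sets (\<pi> \<Otimes>\<^sub>M \<pi>)" for k
    using sets_num_common_ge[of k] sets_pair_measure_cong[OF sets_\<pi> sets_\<pi>] by simp
  then have "(\<integral>\<^sup>+z. enat_power (1 + c) (num_common (fst z) (snd z)) \<partial>(\<pi> \<Otimes>\<^sub>M \<pi>))
      \<le> ennreal (1 + (1 + c - 1) * C * \<eta> / (1 - (1 + c) * \<eta>))"
    using c \<eta> C tail by (intro nn_integral_enat_power_le \<pi>\<pi>.prob_space_axioms) (simp_all add: tail_event)
  then show ?thesis by (simp add: order_trans[OF nn_integral_mixture_lr_square_le[OF c]])
qed

lemma ex_inf_saw: "\<exists>P. P \<in> inf_saw E r0"
proof (rule ccontr)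
  assume "\<nexists>P. P \<in> inf_saw E r0"
  then have "AE P in \<pi>. False" using AE_inf_saw by simp
  then show False by simp
qed

lemma risk_bounds:
  assumes T: "is_test T" and m: "0 < m"
  shows "{x. T x} \<in> sets (law0 F0)"
    and "measure (law0 F0) {x. T x} \<le> risk E r0 F0 F1 m T"
    and "\<And>p. p \<in> fin_saw E r0 m \<Longrightarrow> 1 - risk E r0 F0 F1 m T \<le> measure (law1 F0 F1 p) {x. T x}"
proof -
  let ?\<beta> = "\<lambda>p. measure (law1 F0 F1 p) {x. \<not> T x}"
  have sets_law1: "sets (law1 F0 F1 p) = sets (law0 F0)" for p :: "'v list"
    by (simp add: law1_eq_density)
  have space_law1: "space (law1 F0 F1 p) = UNIV" for p :: "'v list"
    using sets_eq_imp_space_eq[OF sets_law1] space_law0 by simp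
  have "sets (law0 F0) = sets (PiM UNIV (\<lambda>_::'v. borel))"
    unfolding law0_def by (rule sets_PiM_cong) (simp_all add: sets_F0)
  then have "T \<in> measurable (law0 F0) (count_space UNIV)"
    using T measurable_cong_sets unfolding is_test_def by blast
  from measurable_sets[OF this, of "{True}"] show A: "{x. T x} \<in> sets (law0 F0)"
    by (simp add: space_law0 vimage_def)
  have risk: "risk E r0 F0 F1 m T = measure (law0 F0) {x. T x} + (SUP p \<in> fin_saw E r0 m. ?\<beta> p)"
    by (simp add: risk_def space_law0 space_law1)
  have bdd: "bdd_above (?\<beta> ` fin_saw E r0 m)"
    by (intro bdd_aboveI[where M=1]) (auto intro: prob_space.prob_le_1[OF prob_space_law1])
  have \<beta>_le: "?\<beta> p \<le> (SUP p \<in> fin_saw E r0 m. ?\<beta> p)" if "p \<in> fin_saw E r0 m" for p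
    by (rule cSUP_upper[OF that bdd])
  obtain P where "P \<in> inf_saw E r0" using ex_inf_saw by blast
  from \<beta>_le[OF path_prefix_in_fin_saw[OF this m]] have "0 \<le> (SUP p \<in> fin_saw E r0 m. ?\<beta> p)"
    using measure_nonneg order_trans by blast
  then show "measure (law0 F0) {x. T x} \<le> risk E r0 F0 F1 m T"
    using risk by simp
  fix p assume p: "p \<in> fin_saw E r0 m"
  have "measure (law1 F0 F1 p) {x. T x} = 1 - ?\<beta> p"
    using prob_space.prob_compl[OF prob_space_law1, of "{x. T x}" p] A sets_law1
    by (simp add: space_law1 Compl_eq[symmetric] Collect_neg_eq[symmetric] flip: Compl_eq_Diff_UNIV)
  then show "1 - risk E r0 F0 F1 m T \<le> measure (law1 F0 F1 p) {x. T x}"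
    using risk \<beta>_le[OF p] measure_nonneg[of "law0 F0" "{x. T x}"] by linarith
qed

lemma one_minus_risk_le_sqrt:
  assumes T: "is_test T" and m: "0 < m"
    and K: "(\<integral>\<^sup>+x. mixture_lr m x ^ 2 \<partial>law0 F0) \<le> ennreal K" "0 \<le> K"
  shows "1 - risk E r0 F0 F1 m T \<le> sqrt (K * risk E r0 F0 F1 m T)"
proof -
  define \<rho> where "\<rho> = risk E r0 F0 F1 m T"
  define A where "A = {x. T x}"
  note bounds = risk_bounds[OF T m, folded A_def \<rho>_def]
  have \<rho>: "0 \<le> \<rho>" using bounds(2) measure_nonneg order_trans by blast
  show ?thesis
    unfolding \<rho>_def[symmetric]
  proof (cases "\<rho> \<le> 1")
    case False
    moreover have "0 \<le> sqrt (K * \<rho>)" using K(2) \<rho> by simp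
    ultimately show "1 - \<rho> \<le> sqrt (K * \<rho>)" by linarith
  next
    case True
    have "ennreal (1 - \<rho>) ^ 2 \<le> (\<integral>\<^sup>+x. mixture_lr m x * indicator A x \<partial>law0 F0) ^ 2"
      using nn_integral_mixture_lr_indicator_ge[OF bounds(1) m bounds(3)] by (intro power_mono zero_le)
    also have "\<dots> \<le> (\<integral>\<^sup>+x. mixture_lr m x ^ 2 \<partial>law0 F0) * (\<integral>\<^sup>+x. indicator A x ^ 2 \<partial>law0 F0)"
      using bounds(1) borel_measurable_mixture_lr by (intro Cauchy_Schwarz_nn_integral) simp_all
    also have "(\<integral>\<^sup>+x. indicator A x ^ 2 \<partial>law0 F0) = ennreal (measure (law0 F0) A)"
      using bounds(1) by (subst nn_integral_cong[where v="indicator A"])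
        (auto simp: law0.emeasure_eq_measure split: split_indicator)
    also have "(\<integral>\<^sup>+x. mixture_lr m x ^ 2 \<partial>law0 F0) * ennreal (measure (law0 F0) A) \<le> ennreal K * ennreal \<rho>"
      using K bounds(2) by (intro mult_mono ennreal_leI) simp_all
    finally have "ennreal ((1 - \<rho>) ^ 2) \<le> ennreal (K * \<rho>)"
      using True K \<rho> by (simp add: ennreal_power ennreal_mult)
    then have "(1 - \<rho>)\<^sup>2 \<le> K * \<rho>"
      using K \<rho> by (simp add: ennreal_le_iff)
    then show "1 - \<rho> \<le> sqrt (K * \<rho>)" by (rule real_le_rsqrt)
  qed
qed

end

theorem theorem5p3:
  fixes E :: "'v::countable \<Rightarrow> 'v \<Rightarrow> bool" and r0 :: 'v
    and F0 F1 :: "real measure" and \<pi> :: "(nat \<Rightarrow> 'v) measure" and \<eta> :: real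
  assumes "connected_graph E r0"
    and "prob_space F0" "prob_space F1" "sets F0 = sets borel" "sets F1 = sets borel"
    and "absolutely_continuous F0 F1"
    and "prob_space \<pi>" "sets \<pi> = sets path_space" "AE P in \<pi>. P \<in> inf_saw E r0"
    and "0 < \<eta>" "\<eta> < 1" "exp_intersection_tail \<pi> \<eta>"
    and "chi2 F0 F1 < ennreal (1 / \<eta> - 1)"
  shows "\<not> (\<exists>T :: nat \<Rightarrow> ('v \<Rightarrow> real) \<Rightarrow> bool.
             (\<forall>m. is_test (T m)) \<and> (\<lambda>m. risk E r0 F0 F1 m (T m)) \<longlonglongrightarrow> 0)"
proof
  assume "\<exists>T :: nat \<Rightarrow> ('v \<Rightarrow> real) \<Rightarrow> bool. (\<forall>m. is_test (T m)) \<and> (\<lambda>m. risk E r0 F0 F1 m (T m)) \<longlonglongrightarrow> 0"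
  then obtain T :: "nat \<Rightarrow> ('v \<Rightarrow> real) \<Rightarrow> bool"
    where T: "\<And>m. is_test (T m)" and risk: "(\<lambda>m. risk E r0 F0 F1 m (T m)) \<longlonglongrightarrow> 0" by blast
  interpret saw_prior E r0 F0 F1 \<pi> using assms(2-9) by (simp add: saw_prior_def)
  obtain c where c: "chi2 F0 F1 = ennreal c" "0 \<le> c" "c < 1 / \<eta> - 1"
    using assms(13) by (cases "chi2 F0 F1" rule: ennreal_cases) (auto simp: ennreal_less_iff)
  obtain C where C: "0 < C"
    and tail: "\<And>k. 1 \<le> k \<Longrightarrow> measure (\<pi> \<Otimes>\<^sub>M \<pi>) {(P, P'). enat k \<le> num_common P P'} \<le> C * \<eta> ^ k"
    using assms(12) unfolding exp_intersection_tail_def by blast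
  define K where "K = 1 + c * C * \<eta> / (1 - (1 + c) * \<eta>)"
  have "(1 + c) * \<eta> < 1"
    using c(3) assms(10) by (simp add: field_simps)
  then have K: "0 \<le> K" "\<And>m. (\<integral>\<^sup>+x. mixture_lr m x ^ 2 \<partial>law0 F0) \<le> ennreal K"
    using nn_integral_mixture_lr_square_bound[OF c(1,2) _ _ _ tail] c C assms(10)
    by (simp_all add: K_def)
  have "\<forall>\<^sub>F m in sequentially. 1 - risk E r0 F0 F1 m (T m) \<le> sqrt (K * risk E r0 F0 F1 m (T m))"
    using eventually_gt_at_top[of 0] by eventually_elim (rule one_minus_risk_le_sqrt[OF T _ K(2) K(1)])
  moreover have "(\<lambda>m. 1 - risk E r0 F0 F1 m (T m)) \<longlonglongrightarrow> 1"
    using tendsto_diff[OF tendsto_const risk, of 1] by simp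
  moreover have "(\<lambda>m. sqrt (K * risk E r0 F0 F1 m (T m))) \<longlonglongrightarrow> 0"
    using tendsto_real_sqrt[OF tendsto_mult[OF tendsto_const risk, of K]] by simp
  ultimately have "(1::real) \<le> 0"
    by (intro tendsto_le[OF trivial_limit_sequentially])
  then show False by simp
qed

end
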